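(* The hypergraph $\mathcal{H}$ (defined in the context) is linear, i.e. any two distinct edges of $\mathcal{H}$ share at most one vertex.
   Context: Let $r \geq 2$ and $l \geq 1$ be integers and $q$ a power of an odd prime. Let $\alpha_1, \dots, \alpha_r$ be distinct elements of $\mathbb{F}_q$, and let $m_1, \dots, m_l$ be distinct elements of $\mathbb{F}_q^* = \mathbb{F}_q\setminus\{0\}$ such that $m_s(\alpha_k - \alpha_i) \neq m_t(\alpha_k - \alpha_j)$ whenever $1 \leq s,t \leq l$ and $i,j,k$ are distinct integers in $\{1,\dots,r\}$. For $1 \leq i \leq r$ let $V_i = \mathbb{F}_q \times \mathbb{F}_q \times \{i\}$. For $x,y \in \mathbb{F}_q$, $a \in \mathbb{F}_q^*$, $s \in \{1,\dots,l\}$ let \[ e(x,y,a,m_s) = \{(x + \alpha_i m_s a,\; y + \alpha_i m_s a^2,\; i) : 1 \leq i \leq r\}. \] $\mathcal{H}$ is the $r$-uniform hypergraph with vertex set $V_1 \cup \dots \cup V_r$ and edge set $\{e(x,y,a,m_s) : x,y \in \mathbb{F}_q,\ a \in \mathbb{F}_q^*,\ 1 \leq s \leq l\}$. *)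

theory Defs
  imports "HOL-Computational_Algebra.Primes"
begin

definition hedge :: "nat \<Rightarrow> (nat \<Rightarrow> 'a::field) \<Rightarrow> 'a \<Rightarrow> 'a \<Rightarrow> 'a \<Rightarrow> 'a \<Rightarrow> ('a \<times> 'a \<times> nat) set" where
  "hedge r \<alpha> x y a ms = {(x + \<alpha> i * ms * a, y + \<alpha> i * ms * a^2, i) | i. 1 \<le> i \<and> i \<le> r}"

definition hvertices :: "nat \<Rightarrow> ('a::field \<times> 'a \<times> nat) set" where
  "hvertices r = {(u, v, i) | u v i. 1 \<le> i \<and> i \<le> r}"

definition hedges :: "nat \<Rightarrow> nat \<Rightarrow> (nat \<Rightarrow> 'a::field) \<Rightarrow> (nat \<Rightarrow> 'a) \<Rightarrow> ('a \<times> 'a \<times> nat) set set" where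
  "hedges r l \<alpha> m = {hedge r \<alpha> x y a (m s) | x y a s. a \<noteq> 0 \<and> 1 \<le> s \<and> s \<le> l}"

definition linear_hypergraph :: "'v set set \<Rightarrow> bool" where
  "linear_hypergraph E \<longleftrightarrow> (\<forall>e1\<in>E. \<forall>e2\<in>E. e1 \<noteq> e2 \<longrightarrow> card (e1 \<inter> e2) \<le> 1)"

end

theory Submission
  imports Defs
begin

text \<open>Two vertices of an edge lying in the parts i \<noteq> j determine the edge: its first
  coordinates are the values at \<alpha> i and \<alpha> j of the line through x with slope m_s a, and
  its second coordinates those of the line through y with slope m_s a^2. Two points fix a
  line, so a common pair of vertices fixes x, y, m_s a and m_s a^2, hence a = a' and
  m_s = m_t.\<close>

lemma line_eq_if_agree_at_two_points:
  fixes s t c c' u u' :: "'a::field"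
  assumes "s \<noteq> t" and "c + s * u = c' + s * u'" and "c + t * u = c' + t * u'"
  shows "u = u' \<and> c = c'"
proof -
  have "c - c' = s * u' - s * u" "c - c' = t * u' - t * u"
    using assms(2,3) by (simp_all add: algebra_simps)
  then have "(s - t) * u = (s - t) * u'"
    by (simp add: algebra_simps)
  then have "u = u'"
    using \<open>s \<noteq> t\<close> by simp
  with assms(2) show ?thesis
    by simp
qed

lemma mem_hedge_iff:
  "(u, v, i) \<in> hedge r \<alpha> x y a ms \<longleftrightarrow>
     1 \<le> i \<and> i \<le> r \<and> u = x + \<alpha> i * ms * a \<and> v = y + \<alpha> i * ms * a^2"
  unfolding hedge_def by auto

lemma finite_hedge: "finite (hedge r \<alpha> x y a ms)"
proof -
  have "hedge r \<alpha> x y a ms = (\<lambda>i. (x + \<alpha> i * ms * a, y + \<alpha> i * ms * a^2, i)) ` {1..r}"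
    unfolding hedge_def by auto
  then show ?thesis
    by simp
qed

lemma hedge_eq_if_two_common_vertices:
  fixes \<alpha> :: "nat \<Rightarrow> 'a::field"
  assumes "\<alpha> i \<noteq> \<alpha> j" and "a \<noteq> 0" and "ms \<noteq> 0"
    and "(u, v, i) \<in> hedge r \<alpha> x y a ms" "(u, v, i) \<in> hedge r \<alpha> x' y' a' mt"
    and "(u', v', j) \<in> hedge r \<alpha> x y a ms" "(u', v', j) \<in> hedge r \<alpha> x' y' a' mt"
  shows "hedge r \<alpha> x y a ms = hedge r \<alpha> x' y' a' mt"
proof -
  have slope: "ms * a = mt * a'" and "x = x'"
    using line_eq_if_agree_at_two_points[OF \<open>\<alpha> i \<noteq> \<alpha> j\<close>, of x "ms * a" x' "mt * a'"] assms(4-7)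
    by (simp_all add: mem_hedge_iff mult.assoc)
  have "ms * a^2 = mt * a'^2" and "y = y'"
    using line_eq_if_agree_at_two_points[OF \<open>\<alpha> i \<noteq> \<alpha> j\<close>, of y "ms * a^2" y' "mt * a'^2"] assms(4-7)
    by (simp_all add: mem_hedge_iff mult.assoc)
  then have "(ms * a) * a = (mt * a') * a'"
    by (simp add: power2_eq_square mult.assoc)
  with slope \<open>a \<noteq> 0\<close> \<open>ms \<noteq> 0\<close> have "a = a'" and "ms = mt"
    by auto
  with \<open>x = x'\<close> \<open>y = y'\<close> show ?thesis
    by simp
qed

lemma card_hedge_inter_le_one:
  fixes \<alpha> :: "nat \<Rightarrow> 'a::field"
  assumes "inj_on \<alpha> {1..r}" and "a \<noteq> 0" and "ms \<noteq> 0"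
    and "hedge r \<alpha> x y a ms \<noteq> hedge r \<alpha> x' y' a' mt"
  shows "card (hedge r \<alpha> x y a ms \<inter> hedge r \<alpha> x' y' a' mt) \<le> 1"
proof -
  have "p = p'" if p: "p \<in> hedge r \<alpha> x y a ms \<inter> hedge r \<alpha> x' y' a' mt"
    and p': "p' \<in> hedge r \<alpha> x y a ms \<inter> hedge r \<alpha> x' y' a' mt" for p p'
  proof (rule ccontr)
    assume "p \<noteq> p'"
    obtain u v i u' v' j where uvi: "p = (u, v, i)" and uvj: "p' = (u', v', j)"
      by (cases p, cases p')
    have "i \<noteq> j"
      using p p' \<open>p \<noteq> p'\<close> by (auto simp: uvi uvj mem_hedge_iff)
    moreover have "i \<in> {1..r}" and "j \<in> {1..r}"
      using p p' by (auto simp: uvi uvj mem_hedge_iff)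
    ultimately have "\<alpha> i \<noteq> \<alpha> j"
      using \<open>inj_on \<alpha> {1..r}\<close> by (auto dest: inj_onD)
    then have "hedge r \<alpha> x y a ms = hedge r \<alpha> x' y' a' mt"
      using hedge_eq_if_two_common_vertices[of \<alpha> i j a ms u v r x y x' y' a' mt u' v'] p p'
        \<open>a \<noteq> 0\<close> \<open>ms \<noteq> 0\<close>
      by (simp add: uvi uvj)
    with assms(4) show False ..
  qed
  then show ?thesis
    by (simp add: card_le_Suc0_iff_eq finite_hedge)
qed

lemma linear_hypergraph_hedges:
  fixes \<alpha> m :: "nat \<Rightarrow> 'a::field"
  assumes "inj_on \<alpha> {1..r}" and "\<forall>s\<in>{1..l}. m s \<noteq> 0"
  shows "linear_hypergraph (hedges r l \<alpha> m)"
  unfolding linear_hypergraph_def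
proof (intro ballI impI)
  fix e e' assume "e \<in> hedges r l \<alpha> m" "e' \<in> hedges r l \<alpha> m" and "e \<noteq> e'"
  obtain x y a s where e: "e = hedge r \<alpha> x y a (m s)" and "a \<noteq> 0" "s \<in> {1..l}"
    using \<open>e \<in> hedges r l \<alpha> m\<close> unfolding hedges_def by auto
  obtain x' y' a' t where e': "e' = hedge r \<alpha> x' y' a' (m t)"
    using \<open>e' \<in> hedges r l \<alpha> m\<close> unfolding hedges_def by auto
  have "m s \<noteq> 0"
    using assms(2) \<open>s \<in> {1..l}\<close> by blast
  from \<open>inj_on \<alpha> {1..r}\<close> \<open>a \<noteq> 0\<close> this \<open>e \<noteq> e'\<close> show "card (e \<inter> e') \<le> 1"
    unfolding e e' by (rule card_hedge_inter_le_one)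
qed

theorem lemma3p5:
  fixes \<alpha> m :: "nat \<Rightarrow> 'a::{finite, field}" and r l :: nat
  assumes q: "\<exists>p k. prime p \<and> odd p \<and> k \<ge> 1 \<and> card (UNIV :: 'a set) = p ^ k"
    and r: "r \<ge> 2" and l: "l \<ge> 1"
    and alpha_inj: "inj_on \<alpha> {1..r}"
    and m_inj: "inj_on m {1..l}"
    and m_nz: "\<forall>s\<in>{1..l}. m s \<noteq> 0"
    and cond: "\<forall>s\<in>{1..l}. \<forall>t\<in>{1..l}. \<forall>i\<in>{1..r}. \<forall>j\<in>{1..r}. \<forall>k\<in>{1..r}.
       i \<noteq> j \<and> i \<noteq> k \<and> j \<noteq> k \<longrightarrow> m s * (\<alpha> k - \<alpha> i) \<noteq> m t * (\<alpha> k - \<alpha> j)"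
  shows "linear_hypergraph (hedges r l \<alpha> m)"
  using linear_hypergraph_hedges[OF alpha_inj m_nz] .

end
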